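(* For positive integers $n$ and $m$, $\chi_{ld}(F_n+\overline{K_{m}})=2n+2$.
   Context: All graphs are finite, simple and undirected. For a graph $G=(V,E)$ of order $N$ without isolated vertices, a bijection $f\colon V\to\{1,2,\dots,N\}$ is a local distance antimagic labeling if $w(u)\neq w(v)$ for every edge $uv$, where $w(u)=\sum_{x\in N(u)}f(x)$ and $N(u)$ is the open neighborhood of $u$. $\chi_{ld}(G)$ is the minimum number of distinct values of $w$ over all local distance antimagic labelings of $G$. The friendship graph $F_n$ consists of $n$ triangles sharing one common vertex $c$ (vertices $c,u_i,v_i$, $1\le i\le n$, with edges $cu_i, cv_i, u_iv_i$), i.e. $F_n=nK_2+K_1$. $\overline{K_m}$ is the edgeless graph on $m$ vertices. $G+H$ is the join: the disjoint union of $G$ and $H$ plus all edges between $V(G)$ and $V(H)$. *)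

theory Defs
  imports Main
begin

definition simple_graph :: "'v set \<Rightarrow> ('v \<Rightarrow> 'v \<Rightarrow> bool) \<Rightarrow> bool" where
  "simple_graph V E \<longleftrightarrow> finite V \<and> (\<forall>x y. E x y \<longrightarrow> x \<in> V \<and> y \<in> V \<and> x \<noteq> y \<and> E y x)"

definition nbhd :: "'v set \<Rightarrow> ('v \<Rightarrow> 'v \<Rightarrow> bool) \<Rightarrow> 'v \<Rightarrow> 'v set" where
  "nbhd V E u = {x \<in> V. E u x}"

definition vweight :: "'v set \<Rightarrow> ('v \<Rightarrow> 'v \<Rightarrow> bool) \<Rightarrow> ('v \<Rightarrow> nat) \<Rightarrow> 'v \<Rightarrow> nat" where
  "vweight V E f u = (\<Sum>x\<in>nbhd V E u. f x)"

definition ld_antimagic :: "'v set \<Rightarrow> ('v \<Rightarrow> 'v \<Rightarrow> bool) \<Rightarrow> ('v \<Rightarrow> nat) \<Rightarrow> bool" where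
  "ld_antimagic V E f \<longleftrightarrow> bij_betw f V {1..card V} \<and>
     (\<forall>u\<in>V. \<forall>v\<in>V. E u v \<longrightarrow> vweight V E f u \<noteq> vweight V E f v)"

definition chi_ld :: "'v set \<Rightarrow> ('v \<Rightarrow> 'v \<Rightarrow> bool) \<Rightarrow> nat" where
  "chi_ld V E = Min {card (vweight V E f ` V) | f. ld_antimagic V E f}"

datatype fvert = Center | Uv nat | Vv nat

definition friendship_V :: "nat \<Rightarrow> fvert set" where
  "friendship_V n = {Center} \<union> Uv ` {1..n} \<union> Vv ` {1..n}"

definition friendship_E :: "nat \<Rightarrow> fvert \<Rightarrow> fvert \<Rightarrow> bool" where
  "friendship_E n x y \<longleftrightarrow> x \<in> friendship_V n \<and> y \<in> friendship_V n \<and>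
     ((x = Center \<and> y \<noteq> Center) \<or> (y = Center \<and> x \<noteq> Center) \<or>
      (\<exists>i. (x = Uv i \<and> y = Vv i) \<or> (x = Vv i \<and> y = Uv i)))"

definition empty_V :: "nat \<Rightarrow> nat set" where
  "empty_V m = {1..m}"

definition empty_E :: "nat \<Rightarrow> nat \<Rightarrow> bool" where
  "empty_E x y = False"

definition join_V :: "'a set \<Rightarrow> 'b set \<Rightarrow> ('a + 'b) set" where
  "join_V V1 V2 = Inl ` V1 \<union> Inr ` V2"

fun join_E :: "'a set \<Rightarrow> ('a \<Rightarrow> 'a \<Rightarrow> bool) \<Rightarrow> 'b set \<Rightarrow> ('b \<Rightarrow> 'b \<Rightarrow> bool)
                 \<Rightarrow> ('a + 'b) \<Rightarrow> ('a + 'b) \<Rightarrow> bool" where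
  "join_E V1 E1 V2 E2 (Inl x) (Inl y) = E1 x y"
| "join_E V1 E1 V2 E2 (Inr x) (Inr y) = E2 x y"
| "join_E V1 E1 V2 E2 (Inl x) (Inr y) = (x \<in> V1 \<and> y \<in> V2)"
| "join_E V1 E1 V2 E2 (Inr x) (Inl y) = (x \<in> V2 \<and> y \<in> V1)"

end

theory Submission
  imports Defs
begin

(* Write c for the centre of F_n, R for its other 2n vertices, W for the m vertices of the
   coclique, and T, S for the label sums over R and W.  Then w(c) = T + S, w(y) = f(c) + f(y') + S
   for y in R with triangle mate y', and every vertex of W has weight f(c) + T.  The vertex c,
   the vertices of R and one vertex of W are pairwise adjacent except for non-mates in R, whose
   weights differ by injectivity of f; so every labeling has exactly 2n + 2 weights.
   Conversely, if f(c) = 1 then all other labels are at least 2, and the only constraint that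
   can fail is T = f(y) + S; giving the largest labels to R when m < 2n and to W otherwise
   rules it out. *)

lemma nbhd_join_Inl:
  "x \<in> V1 \<Longrightarrow>
   nbhd (join_V V1 V2) (join_E V1 E1 V2 E2) (Inl x) = Inl ` nbhd V1 E1 x \<union> Inr ` V2"
  by (force simp: nbhd_def join_V_def elim: join_E.elims)

lemma nbhd_join_Inr:
  "y \<in> V2 \<Longrightarrow>
   nbhd (join_V V1 V2) (join_E V1 E1 V2 E2) (Inr y) = Inl ` V1 \<union> Inr ` nbhd V2 E2 y"
  by (force simp: nbhd_def join_V_def elim: join_E.elims)

lemma vweight_join_Inl:
  assumes "finite V1" "finite V2" "x \<in> V1"
  shows "vweight (join_V V1 V2) (join_E V1 E1 V2 E2) f (Inl x)
           = vweight V1 E1 (f \<circ> Inl) x + (\<Sum>y\<in>V2. f (Inr y))"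
  using assms unfolding vweight_def nbhd_join_Inl[OF assms(3)]
  by (subst sum.union_disjoint) (auto simp: sum.reindex nbhd_def)

lemma vweight_join_Inr:
  assumes "finite V1" "finite V2" "y \<in> V2"
  shows "vweight (join_V V1 V2) (join_E V1 E1 V2 E2) f (Inr y)
           = (\<Sum>x\<in>V1. f (Inl x)) + vweight V2 E2 (f \<circ> Inr) y"
  using assms unfolding vweight_def nbhd_join_Inr[OF assms(3)]
  by (subst sum.union_disjoint) (auto simp: sum.reindex nbhd_def)

lemma card_join_V:
  "finite V1 \<Longrightarrow> finite V2 \<Longrightarrow> card (join_V V1 V2) = card V1 + card V2"
  unfolding join_V_def by (subst card_Un_disjoint) (auto simp: card_image)

lemma member_add_card_mult_le_sum:
  fixes g :: "'a \<Rightarrow> nat"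
  assumes "finite A" "y \<in> A" "\<And>z. z \<in> A \<Longrightarrow> lo \<le> g z"
  shows "g y + (card A - 1) * lo \<le> sum g A"
proof -
  have "(card A - 1) * lo \<le> sum g (A - {y})"
    using assms sum_bounded_below[of "A - {y}" lo g] by simp
  then show ?thesis
    using assms by (simp add: sum.remove)
qed

fun mate :: "fvert \<Rightarrow> fvert" where
  "mate Center = Center"
| "mate (Uv i) = Vv i"
| "mate (Vv i) = Uv i"

lemma mate_mate [simp]: "mate (mate y) = y"
  by (cases y) auto

lemma mate_in_friendship_V_iff [simp]: "mate y \<in> friendship_V n \<longleftrightarrow> y \<in> friendship_V n"
  by (cases y) (auto simp: friendship_V_def)

lemma mate_eq_Center_iff [simp]: "mate y = Center \<longleftrightarrow> y = Center"
  by (cases y) auto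

lemma mate_eq_self_iff [simp]: "mate y = y \<longleftrightarrow> y = Center"
  by (cases y) auto

lemma finite_friendship_V [simp]: "finite (friendship_V n)"
  by (simp add: friendship_V_def)

lemma Center_in_friendship_V [simp]: "Center \<in> friendship_V n"
  by (simp add: friendship_V_def)

lemma card_friendship_rim: "card (friendship_V n - {Center}) = 2 * n"
proof -
  have "friendship_V n - {Center} = Uv ` {1..n} \<union> Vv ` {1..n}"
    by (auto simp: friendship_V_def)
  moreover have "card (Uv ` {1..n} \<union> Vv ` {1..n}) = n + n"
    by (subst card_Un_disjoint) (auto simp: card_image inj_on_def)
  ultimately show ?thesis by simp
qed

lemma friendship_E_iff:
  "friendship_E n x y \<longleftrightarrow> x \<in> friendship_V n \<and> y \<in> friendship_V n \<and>
     (x = Center \<and> y \<noteq> Center \<or> y = Center \<and> x \<noteq> Center \<or> x \<noteq> Center \<and> y = mate x)"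
  by (cases x; cases y) (auto simp: friendship_E_def)

lemma nbhd_friendship_Center:
  "nbhd (friendship_V n) (friendship_E n) Center = friendship_V n - {Center}"
  by (auto simp: nbhd_def friendship_E_def)

lemma nbhd_friendship_rim:
  "y \<in> friendship_V n - {Center} \<Longrightarrow>
   nbhd (friendship_V n) (friendship_E n) y = {Center, mate y}"
  by (cases y) (auto simp: nbhd_def friendship_E_def friendship_V_def)

lemma vweight_friendship_rim:
  "y \<in> friendship_V n - {Center} \<Longrightarrow>
   vweight (friendship_V n) (friendship_E n) g y = g Center + g (mate y)"
  by (simp add: vweight_def nbhd_friendship_rim eq_commute[of Center])

lemma vweight_empty_E: "vweight V empty_E g j = 0"
  by (simp add: vweight_def nbhd_def empty_E_def)

definition FK_V :: "nat \<Rightarrow> nat \<Rightarrow> (fvert + nat) set" where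
  "FK_V n m = join_V (friendship_V n) (empty_V m)"

definition FK_E :: "nat \<Rightarrow> nat \<Rightarrow> fvert + nat \<Rightarrow> fvert + nat \<Rightarrow> bool" where
  "FK_E n m = join_E (friendship_V n) (friendship_E n) (empty_V m) empty_E"

definition rim_sum :: "nat \<Rightarrow> (fvert + nat \<Rightarrow> nat) \<Rightarrow> nat" where
  "rim_sum n f = (\<Sum>y\<in>friendship_V n - {Center}. f (Inl y))"

definition coclique_sum :: "nat \<Rightarrow> (fvert + nat \<Rightarrow> nat) \<Rightarrow> nat" where
  "coclique_sum m f = (\<Sum>j\<in>{1..m}. f (Inr j))"

lemma vweight_FK_Center:
  "vweight (FK_V n m) (FK_E n m) f (Inl Center) = rim_sum n f + coclique_sum m f"
  by (simp add: FK_V_def FK_E_def vweight_join_Inl empty_V_def)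
     (simp add: vweight_def nbhd_friendship_Center rim_sum_def coclique_sum_def)

lemma vweight_FK_rim:
  "y \<in> friendship_V n - {Center} \<Longrightarrow>
   vweight (FK_V n m) (FK_E n m) f (Inl y) = f (Inl Center) + f (Inl (mate y)) + coclique_sum m f"
  by (simp add: FK_V_def FK_E_def vweight_join_Inl empty_V_def vweight_friendship_rim
        coclique_sum_def)

lemma vweight_FK_coclique:
  "j \<in> {1..m} \<Longrightarrow> vweight (FK_V n m) (FK_E n m) f (Inr j) = f (Inl Center) + rim_sum n f"
  by (simp add: FK_V_def FK_E_def vweight_join_Inr empty_V_def vweight_empty_E rim_sum_def
        sum.remove[of "friendship_V n" Center])

lemma card_FK_V: "card (FK_V n m) = 2 * n + 1 + m"
proof -
  have "card (friendship_V n) = 2 * n + 1"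
    using card_Suc_Diff1[of "friendship_V n" Center] by (simp add: card_friendship_rim)
  then show ?thesis by (simp add: FK_V_def empty_V_def card_join_V)
qed

lemma FK_V_eq:
  "FK_V n m = insert (Inl Center) (Inl ` (friendship_V n - {Center})) \<union> Inr ` {1..m}"
  by (auto simp: FK_V_def join_V_def empty_V_def)

lemma FK_V_cases:
  assumes "u \<in> FK_V n m"
  obtains "u = Inl Center" | i where "i \<in> {1..n}" "u = Inl (Uv i)"
    | i where "i \<in> {1..n}" "u = Inl (Vv i)" | j where "j \<in> {1..m}" "u = Inr j"
  using assms by (auto simp: FK_V_def join_V_def friendship_V_def empty_V_def)

lemma mem_FK_V [simp]:
  "Inl x \<in> FK_V n m \<longleftrightarrow> x \<in> friendship_V n" "Inr j \<in> FK_V n m \<longleftrightarrow> j \<in> {1..m}"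
  by (auto simp: FK_V_def join_V_def empty_V_def)

lemma FK_E_Center_rim: "y \<in> friendship_V n - {Center} \<Longrightarrow> FK_E n m (Inl Center) (Inl y)"
  by (simp add: FK_E_def friendship_E_iff)

lemma FK_E_Center_coclique: "j \<in> {1..m} \<Longrightarrow> FK_E n m (Inl Center) (Inr j)"
  by (simp add: FK_E_def empty_V_def)

lemma FK_E_coclique_rim: "y \<in> friendship_V n \<Longrightarrow> j \<in> {1..m} \<Longrightarrow> FK_E n m (Inr j) (Inl y)"
  by (simp add: FK_E_def empty_V_def)

lemma FK_E_cases:
  assumes "FK_E n m u v"
  obtains (Center_rim) y where "y \<in> friendship_V n - {Center}" "{u, v} = {Inl Center, Inl y}"
  | (Center_coclique) j where "j \<in> {1..m}" "{u, v} = {Inl Center, Inr j}"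
  | (mates) y where "y \<in> friendship_V n - {Center}" "u = Inl y" "v = Inl (mate y)"
  | (rim_coclique) y j
      where "y \<in> friendship_V n - {Center}" "j \<in> {1..m}" "{u, v} = {Inl y, Inr j}"
  using assms unfolding FK_E_def
  by (cases u; cases v) (auto simp: friendship_E_iff empty_V_def empty_E_def)

lemma card_vweight_image_FK:
  assumes f: "ld_antimagic (FK_V n m) (FK_E n m) f" and "m \<ge> 1"
  shows "card (vweight (FK_V n m) (FK_E n m) f ` FK_V n m) = 2 * n + 2"
proof -
  let ?w = "vweight (FK_V n m) (FK_E n m) f"
  let ?R = "friendship_V n - {Center}"
  have inj: "inj_on f (FK_V n m)"
    using f by (simp add: ld_antimagic_def bij_betw_def)
  have adjacent: "?w u \<noteq> ?w v" if "FK_E n m u v" "u \<in> FK_V n m" "v \<in> FK_V n m" for u v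
    using f that by (simp add: ld_antimagic_def)
  have "inj_on (?w \<circ> Inl) ?R"
  proof (rule inj_onI)
    fix y z assume "y \<in> ?R" "z \<in> ?R" "(?w \<circ> Inl) y = (?w \<circ> Inl) z"
    then have "f (Inl (mate y)) = f (Inl (mate z))" "mate y \<in> ?R" "mate z \<in> ?R"
      by (simp_all add: vweight_FK_rim)
    then have "mate y = mate z"
      using inj by (auto dest: inj_onD)
    then show "y = z" by (metis mate_mate)
  qed
  then have card_rim: "card ((?w \<circ> Inl) ` ?R) = 2 * n"
    by (subst card_image) (simp_all add: card_friendship_rim)
  have "?w ` Inr ` {1..m} = {?w (Inr 1)}"
    using \<open>m \<ge> 1\<close> by (auto simp: vweight_FK_coclique image_iff)
  then have "?w ` FK_V n m = insert (?w (Inl Center)) (insert (?w (Inr 1)) ((?w \<circ> Inl) ` ?R))"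
    by (subst arg_cong[OF FK_V_eq]) (auto simp: image_Un)
  moreover have "?w (Inl Center) \<noteq> ?w (Inr 1)"
    using \<open>m \<ge> 1\<close> by (intro adjacent FK_E_Center_coclique) auto
  moreover have "?w (Inl Center) \<notin> (?w \<circ> Inl) ` ?R" "?w (Inr 1) \<notin> (?w \<circ> Inl) ` ?R"
    using \<open>m \<ge> 1\<close> adjacent FK_E_Center_rim FK_E_coclique_rim by fastforce+
  ultimately show ?thesis
    using card_rim by simp
qed

lemma ld_antimagic_FK_if:
  assumes bij: "bij_betw f (FK_V n m) {1..card (FK_V n m)}"
    and centre: "f (Inl Center) = 1"
    and sums: "\<And>y. y \<in> friendship_V n - {Center} \<Longrightarrow>
                 rim_sum n f \<noteq> f (Inl y) + coclique_sum m f"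
  shows "ld_antimagic (FK_V n m) (FK_E n m) f"
proof -
  let ?w = "vweight (FK_V n m) (FK_E n m) f"
  let ?R = "friendship_V n - {Center}"
  have inj: "inj_on f (FK_V n m)"
    using bij by (simp add: bij_betw_def)
  have label_ge_2: "2 \<le> f u" if "u \<in> FK_V n m" "u \<noteq> Inl Center" for u
  proof -
    have "f u \<noteq> f (Inl Center)"
      using inj that by (auto dest: inj_onD)
    moreover have "1 \<le> f u"
      using bij that by (auto dest: bij_betw_apply)
    ultimately show ?thesis using centre by simp
  qed
  have mates_le_rim_sum: "f (Inl y) + f (Inl (mate y)) \<le> rim_sum n f" if "y \<in> ?R" for y
  proof -
    have "(\<Sum>z\<in>{y, mate y}. f (Inl z)) \<le> rim_sum n f"
      unfolding rim_sum_def using that by (intro sum_mono2) auto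
    then show ?thesis using that by (simp add: eq_commute[of y "mate y"])
  qed
  have "coclique_sum m f \<noteq> 1"
  proof (cases "m = 0")
    case False
    then have "f (Inr 1) \<le> coclique_sum m f"
      unfolding coclique_sum_def by (intro member_le_sum) auto
    moreover have "2 \<le> f (Inr 1)"
      using False by (intro label_ge_2) auto
    ultimately show ?thesis by linarith
  qed (simp add: coclique_sum_def)
  then have ne_Center_coclique: "?w (Inl Center) \<noteq> ?w (Inr j)" if "j \<in> {1..m}" for j
    using that by (simp add: vweight_FK_Center vweight_FK_coclique centre)
  have ne_Center_rim: "?w (Inl Center) \<noteq> ?w (Inl y)" if "y \<in> ?R" for y
    using that mates_le_rim_sum[of y] label_ge_2[of "Inl y"]
    by (simp add: vweight_FK_Center vweight_FK_rim centre)
  have ne_mates: "?w (Inl y) \<noteq> ?w (Inl (mate y))" if "y \<in> ?R" for y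
    using that inj by (auto simp: vweight_FK_rim dest: inj_onD)
  have ne_rim_coclique: "?w (Inl y) \<noteq> ?w (Inr j)" if "y \<in> ?R" "j \<in> {1..m}" for y j
  proof -
    have "rim_sum n f \<noteq> f (Inl (mate y)) + coclique_sum m f"
      using that by (intro sums) simp
    then show ?thesis
      using that by (simp add: vweight_FK_rim vweight_FK_coclique centre)
  qed
  have "?w u \<noteq> ?w v" if "FK_E n m u v" for u v
    using that
  proof (cases rule: FK_E_cases)
    case (Center_rim y)
    then show ?thesis using ne_Center_rim[of y] by (auto simp: doubleton_eq_iff)
  next
    case (Center_coclique j)
    then show ?thesis using ne_Center_coclique[of j] by (auto simp: doubleton_eq_iff)
  next
    case (mates y)
    then show ?thesis using ne_mates[of y] by simp
  next
    case (rim_coclique y j)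
    then show ?thesis using ne_rim_coclique[of y j] by (auto simp: doubleton_eq_iff)
  qed
  then show ?thesis
    using bij by (simp add: ld_antimagic_def)
qed

definition block_labeling :: "nat \<Rightarrow> nat \<Rightarrow> nat \<Rightarrow> fvert + nat \<Rightarrow> nat" where
  "block_labeling n s t u =
     (case u of
        Inl Center \<Rightarrow> 1
      | Inl (Uv i) \<Rightarrow> t + i
      | Inl (Vv i) \<Rightarrow> t + n + i
      | Inr j \<Rightarrow> s + j)"

lemma block_labeling_rim_bounds:
  "y \<in> friendship_V n - {Center} \<Longrightarrow>
   t + 1 \<le> block_labeling n s t (Inl y) \<and> block_labeling n s t (Inl y) \<le> t + 2 * n"
  by (auto simp: friendship_V_def block_labeling_def)

lemma bij_betw_block_labeling:
  assumes "s = 1 \<and> t = m + 1 \<or> s = 2 * n + 1 \<and> t = 1"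
  shows "bij_betw (block_labeling n s t) (FK_V n m) {1..card (FK_V n m)}"
proof -
  have "inj_on (block_labeling n s t) (FK_V n m)"
    using assms by (intro inj_onI) (auto elim!: FK_V_cases simp: block_labeling_def)
  moreover have "block_labeling n s t ` FK_V n m \<subseteq> {1..card (FK_V n m)}"
    using assms by (auto elim!: FK_V_cases simp: block_labeling_def card_FK_V)
  ultimately show ?thesis
    by (simp add: bij_betw_def card_subset_eq card_image)
qed

lemma ld_antimagic_block_labeling_small_coclique:
  assumes "m < 2 * n"
  shows "ld_antimagic (FK_V n m) (FK_E n m) (block_labeling n 1 (m + 1))"
proof (rule ld_antimagic_FK_if)
  let ?f = "block_labeling n 1 (m + 1)"
  show "bij_betw ?f (FK_V n m) {1..card (FK_V n m)}"
    by (rule bij_betw_block_labeling) simp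
  show "?f (Inl Center) = 1"
    by (simp add: block_labeling_def)
  fix y assume y: "y \<in> friendship_V n - {Center}"
  have "coclique_sum m ?f \<le> m * (m + 1)"
    using sum_bounded_above[of "{1..m}" "\<lambda>j. ?f (Inr j)" "m + 1"]
    by (simp add: coclique_sum_def block_labeling_def)
  also have "\<dots> \<le> (2 * n - 1) * (m + 1)"
    using assms by (intro mult_right_mono) auto
  also have "\<dots> < (2 * n - 1) * (m + 2)"
    using assms by (intro mult_strict_left_mono) presburger+
  finally have "?f (Inl y) + coclique_sum m ?f < ?f (Inl y) + (2 * n - 1) * (m + 2)"
    by simp
  also have "\<dots> \<le> rim_sum n ?f"
    unfolding rim_sum_def card_friendship_rim[symmetric]
    using y block_labeling_rim_bounds by (intro member_add_card_mult_le_sum) auto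
  finally show "rim_sum n ?f \<noteq> ?f (Inl y) + coclique_sum m ?f"
    by simp
qed

lemma ld_antimagic_block_labeling_large_coclique:
  assumes "n \<ge> 1" "2 * n \<le> m"
  shows "ld_antimagic (FK_V n m) (FK_E n m) (block_labeling n (2 * n + 1) 1)"
proof (rule ld_antimagic_FK_if)
  let ?f = "block_labeling n (2 * n + 1) 1"
  show "bij_betw ?f (FK_V n m) {1..card (FK_V n m)}"
    by (rule bij_betw_block_labeling) simp
  show "?f (Inl Center) = 1"
    by (simp add: block_labeling_def)
  fix y
  have "rim_sum n ?f \<le> 2 * n * (2 * n + 1)"
    unfolding rim_sum_def
    using sum_bounded_above[of "friendship_V n - {Center}" "\<lambda>z. ?f (Inl z)" "2 * n + 1"]
      block_labeling_rim_bounds[where s = "2 * n + 1" and t = 1]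
    by (simp add: card_friendship_rim)
  also have "\<dots> < 2 * n * (2 * n + 2)"
    using assms by (intro mult_strict_left_mono) auto
  also have "\<dots> \<le> m * (2 * n + 2)"
    using assms by (intro mult_right_mono) auto
  also have "\<dots> \<le> coclique_sum m ?f"
    using sum_bounded_below[of "{1..m}" "2 * n + 2" "\<lambda>j. ?f (Inr j)"]
    by (simp add: coclique_sum_def block_labeling_def)
  finally show "rim_sum n ?f \<noteq> ?f (Inl y) + coclique_sum m ?f"
    by simp
qed

theorem mainTheorem3:
  fixes n m :: nat
  assumes "n \<ge> 1" and "m \<ge> 1"
  shows "chi_ld (join_V (friendship_V n) (empty_V m))
                (join_E (friendship_V n) (friendship_E n) (empty_V m) empty_E) = 2 * n + 2"
proof -
  obtain f where f: "ld_antimagic (FK_V n m) (FK_E n m) f"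
    using ld_antimagic_block_labeling_small_coclique ld_antimagic_block_labeling_large_coclique
      \<open>n \<ge> 1\<close> by (meson not_less)
  have "{card (vweight (FK_V n m) (FK_E n m) f ` FK_V n m) | f. ld_antimagic (FK_V n m) (FK_E n m) f}
          = {2 * n + 2}"
    using f card_vweight_image_FK[OF _ \<open>m \<ge> 1\<close>] by (auto intro!: exI[of _ f])
  then show ?thesis
    unfolding chi_ld_def FK_V_def[symmetric] FK_E_def[symmetric] by simp
qed

end
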